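(* Let $G$ be a finite cyclic group and let $f$ be an automorphism of $\mathcal{P}_{0}(G)$ with trivial pullback. Then $f$ is the identity.
   Context: For an additively written finite abelian group $G$, $\mathcal{P}_{0}(G)$ is the monoid of all subsets of $G$ containing $0$, with setwise addition and identity $\{0\}$. An automorphism $f$ of $\mathcal{P}_0(G)$ has trivial pullback if $f(\{0,a\})=\{0,a\}$ for all $a\in G$. *)

theory Defs
  imports Main
begin

definition P0 :: "('a::ab_group_add) set set" where
  "P0 = {A. (0::'a) \<in> A}"

definition setplus :: "('a::ab_group_add) set \<Rightarrow> 'a set \<Rightarrow> 'a set" where
  "setplus A B = {a + b | a b. a \<in> A \<and> b \<in> B}"

definition P0_automorphism :: "(('a::ab_group_add) set \<Rightarrow> 'a set) \<Rightarrow> bool" where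
  "P0_automorphism f \<longleftrightarrow> bij_betw f P0 P0
     \<and> (\<forall>A\<in>P0. \<forall>B\<in>P0. f (setplus A B) = setplus (f A) (f B))
     \<and> f {0} = {0}"

definition trivial_pullback :: "(('a::ab_group_add) set \<Rightarrow> 'a set) \<Rightarrow> bool" where
  "trivial_pullback f \<longleftrightarrow> (\<forall>a. f {0, a} = {0, a})"

definition cyclic_add_group :: "'a::ab_group_add itself \<Rightarrow> bool" where
  "cyclic_add_group _ \<longleftrightarrow> (\<exists>g::'a. \<forall>x::'a. \<exists>n::int. x = (if n \<ge> 0 then ((+) g ^^ nat n) 0 else - (((+) g ^^ nat (-n)) 0)))"

end

theory Submission
  imports Defs
begin

(*
  The identity f (A + {0, x}) = f A + {0, x} shows that f preserves the period
  (stabiliser) of every set; hence f fixes every subgroup H, every set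
  H + {0, g, ..., k g}, and, once it fixes A, every A + {0, x}.  Downward induction
  on |A| then gives f A = A except when the complement of A is a single coset c + H
  of the period H of A.  There cyclicity is needed: if G / H = <g + H> has order n,
  then H + {0, g, ..., (n - 2) g} is the complement of H - g, so the complements of
  H + g and H - g are fixed, and comparing G \ (c + H) with one of them shows
  c \<notin> f (G \ (c + H)).
*)

definition nat_mult :: "nat \<Rightarrow> 'a::ab_group_add \<Rightarrow> 'a" where
  "nat_mult m x = ((+) x ^^ m) 0"

lemma nat_mult_0 [simp]: "nat_mult 0 x = 0"
  by (simp add: nat_mult_def)

lemma nat_mult_Suc [simp]: "nat_mult (Suc m) x = x + nat_mult m x"
  by (simp add: nat_mult_def)

lemma nat_mult_zero [simp]: "nat_mult m 0 = 0"
  by (induction m) simp_all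

lemma nat_mult_add: "nat_mult (i + j) x = nat_mult i x + nat_mult j x"
  by (induction i) (simp_all add: algebra_simps)

lemma nat_mult_mult: "nat_mult (i * j) x = nat_mult i (nat_mult j x)"
  by (induction i) (simp_all add: nat_mult_add)

lemma nat_mult_minus: "nat_mult m (- x) = - nat_mult m x"
  by (induction m) (simp_all add: algebra_simps)

lemma nat_mult_order_exists:
  fixes x :: "'a::{finite,ab_group_add}"
  obtains N where "0 < N" "nat_mult N x = 0"
proof -
  have "\<not> inj (\<lambda>m. nat_mult m x)"
    using finite_imageD[of "\<lambda>m. nat_mult m x" UNIV] by auto
  then obtain i j where "i < j" "nat_mult i x = nat_mult j x"
    unfolding inj_def by (metis linorder_neqE_nat)
  then have "nat_mult (j - i) x = 0"
    using nat_mult_add[of i "j - i" x] by simp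
  with \<open>i < j\<close> show thesis by (intro that) simp_all
qed

lemma cyclic_add_group_nat_mult_generator:
  assumes "cyclic_add_group TYPE('a)"
  obtains g :: "'a::{finite,ab_group_add}" where "range (\<lambda>m. nat_mult m g) = UNIV"
proof -
  obtain g :: 'a where g: "\<And>x. \<exists>n::int. x =
      (if n \<ge> 0 then ((+) g ^^ nat n) 0 else - (((+) g ^^ nat (-n)) 0))"
    using assms unfolding cyclic_add_group_def by blast
  obtain N where N: "0 < N" "nat_mult N g = 0"
    by (rule nat_mult_order_exists)
  have "x \<in> range (\<lambda>m. nat_mult m g)" for x
  proof -
    obtain n :: int where "x = (if n \<ge> 0 then nat_mult (nat n) g else - nat_mult (nat (-n)) g)"
      using g[of x] unfolding nat_mult_def by blast
    moreover have "- nat_mult p g = nat_mult (N * p - p) g" for p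
    proof -
      have "nat_mult (N * p - p) g + nat_mult p g = nat_mult (N * p) g"
        using N(1) by (simp flip: nat_mult_add)
      also have "\<dots> = 0"
        by (simp add: mult.commute[of N] nat_mult_mult N(2))
      finally show ?thesis
        by (metis add.commute neg_eq_iff_add_eq_0)
    qed
    ultimately show ?thesis
      by (cases "n \<ge> 0") auto
  qed
  then show thesis
    by (intro that) blast
qed

definition add_subgroup :: "'a::ab_group_add set \<Rightarrow> bool" where
  "add_subgroup H \<longleftrightarrow> 0 \<in> H \<and> (\<forall>x\<in>H. \<forall>y\<in>H. x + y \<in> H) \<and> (\<forall>x\<in>H. - x \<in> H)"

lemma add_subgroupD:
  assumes "add_subgroup H"
  shows add_subgroup_zero: "0 \<in> H"
    and add_subgroup_add: "x \<in> H \<Longrightarrow> y \<in> H \<Longrightarrow> x + y \<in> H"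
    and add_subgroup_uminus: "x \<in> H \<Longrightarrow> - x \<in> H"
  using assms unfolding add_subgroup_def by blast+

lemma add_subgroup_diff: "add_subgroup H \<Longrightarrow> x \<in> H \<Longrightarrow> y \<in> H \<Longrightarrow> x - y \<in> H"
  using add_subgroup_add[of H x "- y"] add_subgroup_uminus[of H y] by simp

lemma add_subgroup_uminus_iff: "add_subgroup H \<Longrightarrow> - x \<in> H \<longleftrightarrow> x \<in> H"
  using add_subgroup_uminus[of H x] add_subgroup_uminus[of H "- x"] by auto

lemma add_subgroup_nat_mult: "add_subgroup H \<Longrightarrow> x \<in> H \<Longrightarrow> nat_mult m x \<in> H"
  by (induction m) (simp_all add: add_subgroup_zero add_subgroup_add)

lemma add_subgroup_mem_iff_diff_mem:
  "add_subgroup H \<Longrightarrow> x - y \<in> H \<Longrightarrow> x \<in> H \<longleftrightarrow> y \<in> H"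
proof -
  assume H: "add_subgroup H" and xy: "x - y \<in> H"
  have "x = (x - y) + y" "y = x - (x - y)"
    by simp_all
  then show ?thesis
    using add_subgroup_add[OF H xy] add_subgroup_diff[OF H _ xy] by metis
qed

lemma nat_mult_mem_subgroup_iff_dvd:
  fixes g :: "'a::{finite,ab_group_add}"
  assumes H: "add_subgroup H"
  obtains n where "0 < n" "\<And>r. nat_mult r g \<in> H \<longleftrightarrow> n dvd r"
proof -
  obtain N where N: "0 < N" "nat_mult N g = 0"
    by (rule nat_mult_order_exists)
  define n where "n = (LEAST r. 0 < r \<and> nat_mult r g \<in> H)"
  have n: "0 < n" "nat_mult n g \<in> H"
    using LeastI[of "\<lambda>r. 0 < r \<and> nat_mult r g \<in> H" N] N add_subgroup_zero[OF H]
    unfolding n_def by simp_all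
  have "nat_mult r g \<in> H \<longleftrightarrow> n dvd r" for r
  proof
    assume r: "nat_mult r g \<in> H"
    have "nat_mult r g = nat_mult (r div n * n) g + nat_mult (r mod n) g"
      by (simp flip: nat_mult_add)
    then have "nat_mult (r mod n) g = nat_mult r g - nat_mult (r div n * n) g"
      by (simp add: algebra_simps)
    moreover have "nat_mult (r div n * n) g \<in> H"
      using add_subgroup_nat_mult[OF H n(2)] by (simp add: nat_mult_mult)
    ultimately have "nat_mult (r mod n) g \<in> H"
      using add_subgroup_diff[OF H r] by simp
    then have "\<not> 0 < r mod n"
      using not_less_Least[of "r mod n" "\<lambda>r. 0 < r \<and> nat_mult r g \<in> H"] n(1)
      unfolding n_def[symmetric] by auto
    then show "n dvd r"
      by (simp add: dvd_eq_mod_eq_0)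
  next
    assume "n dvd r"
    then obtain q where "r = q * n"
      by (metis dvd_def mult.commute)
    then show "nat_mult r g \<in> H"
      using add_subgroup_nat_mult[OF H n(2)] by (simp add: nat_mult_mult)
  qed
  with n(1) show thesis
    by (rule that)
qed

lemma mem_setplus_pair: "w \<in> setplus A {0, x} \<longleftrightarrow> w \<in> A \<or> w - x \<in> A"
proof -
  have "setplus A {0, x} = A \<union> (\<lambda>a. a + x) ` A"
    unfolding setplus_def by force
  moreover have "w \<in> (\<lambda>a. a + x) ` A \<longleftrightarrow> w - x \<in> A"
    by (auto intro: rev_image_eqI[of "w - x"])
  ultimately show ?thesis
    by simp
qed

lemma subset_setplus_pair: "A \<subseteq> setplus A {0, x}"
  by (auto simp: mem_setplus_pair)

lemma pair_in_P0 [simp]: "{0, x} \<in> P0"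
  by (simp add: P0_def)

lemma setplus_in_P0: "A \<in> P0 \<Longrightarrow> B \<in> P0 \<Longrightarrow> setplus A B \<in> P0"
  unfolding P0_def setplus_def by force

definition period :: "'a::ab_group_add set \<Rightarrow> 'a set" where
  "period A = {x. \<forall>a\<in>A. a + x \<in> A}"

lemma setplus_pair_eq_iff_period: "setplus A {0, x} = A \<longleftrightarrow> x \<in> period A"
proof
  assume eq: "setplus A {0, x} = A"
  have "a + x \<in> setplus A {0, x}" if "a \<in> A" for a
    using that by (simp add: mem_setplus_pair)
  then show "x \<in> period A"
    using eq unfolding period_def by blast
next
  assume "x \<in> period A"
  then have "(w - x) + x \<in> A" if "w - x \<in> A" for w
    using that unfolding period_def by blast
  then have "w \<in> A" if "w - x \<in> A" for w
    using that by simp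
  then show "setplus A {0, x} = A"
    unfolding set_eq_iff mem_setplus_pair by blast
qed

lemma period_eq_self:
  assumes "0 \<in> X" "setplus X X \<subseteq> X"
  shows "period X = X"
proof
  show "period X \<subseteq> X"
    using assms(1) unfolding period_def by force
  show "X \<subseteq> period X"
    using assms(2) unfolding period_def setplus_def by blast
qed

lemma add_subgroup_period:
  fixes A :: "'a::{finite,ab_group_add} set"
  shows "add_subgroup (period A)"
  unfolding add_subgroup_def
proof (intro conjI ballI)
  fix x assume x: "x \<in> period A"
  have "(\<lambda>a. a + x) ` A = A"
    using x by (intro endo_inj_surj) (auto simp: period_def)
  then have "a - x \<in> A" if "a \<in> A" for a
  proof -
    from that \<open>(\<lambda>a. a + x) ` A = A\<close> obtain b where "b \<in> A" "a = b + x"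
      by blast
    then show ?thesis
      by simp
  qed
  then show "- x \<in> period A"
    by (simp add: period_def)
qed (auto simp: period_def add.assoc[symmetric])

definition multiples_upto :: "nat \<Rightarrow> 'a::ab_group_add \<Rightarrow> 'a set" where
  "multiples_upto k x = {nat_mult j x | j. j \<le> k}"

lemma multiples_upto_0: "multiples_upto 0 x = {0}"
  by (simp add: multiples_upto_def)

lemma multiples_upto_Suc: "multiples_upto (Suc k) x = setplus (multiples_upto k x) {0, x}"
proof (rule set_eqI)
  fix w
  have "(\<exists>j\<le>Suc k. w = nat_mult j x) \<longleftrightarrow> (\<exists>j\<le>k. w = nat_mult j x \<or> w = nat_mult (Suc j) x)"
    by (metis Suc_le_mono le_Suc_eq not0_implies_Suc zero_le)
  then have "w \<in> multiples_upto (Suc k) x \<longleftrightarrow> (\<exists>j\<le>k. w = nat_mult j x \<or> w = nat_mult (Suc j) x)"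
    unfolding multiples_upto_def by blast
  also have "\<dots> \<longleftrightarrow> w \<in> setplus (multiples_upto k x) {0, x}"
    unfolding mem_setplus_pair multiples_upto_def by (auto simp: algebra_simps)
  finally show "w \<in> multiples_upto (Suc k) x \<longleftrightarrow> w \<in> setplus (multiples_upto k x) {0, x}" .
qed

lemma multiples_upto_in_P0: "multiples_upto k x \<in> P0"
  unfolding multiples_upto_def P0_def by force

lemma mem_setplus_multiples_upto:
  "w \<in> setplus H (multiples_upto k x) \<longleftrightarrow> (\<exists>j\<le>k. w - nat_mult j x \<in> H)"
  unfolding setplus_def multiples_upto_def by force

lemma coset_compl_eq:
  assumes "add_subgroup H" "c - b \<in> H"
  shows "{w. w - c \<notin> H} = {w. w - b \<notin> H}"
proof -
  have "(w - b) - (w - c) \<in> H" for w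
    using assms(2) by simp
  then show ?thesis
    using add_subgroup_mem_iff_diff_mem[OF assms(1)] by blast
qed

lemma setplus_two_coset_compl:
  assumes H: "add_subgroup H" and uv: "(u - v) + (u - v) \<notin> H"
  shows "setplus {w. w - u \<notin> H \<and> w - v \<notin> H} {0, u - v} = {w. w - u \<notin> H}"
proof -
  have "w - v \<notin> H \<or> w - (u - v) - u \<notin> H" for w
  proof -
    have "(w - v) - (w - (u - v) - u) = (u - v) + (u - v)"
      by (simp add: algebra_simps)
    then show ?thesis
      using add_subgroup_diff[OF H] uv by metis
  qed
  moreover have "w - (u - v) - v = w - u" for w
    by (simp add: algebra_simps)
  ultimately show ?thesis
    unfolding set_eq_iff mem_setplus_pair by auto
qed

lemma coset_compl_of_period:
  fixes A :: "'a::{finite,ab_group_add} set"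
  assumes "c \<notin> A" and compl: "\<And>c'. c' \<notin> A \<Longrightarrow> c - c' \<in> period A"
  shows "A = {w. w - c \<notin> period A}"
proof (rule set_eqI, rule iffI)
  fix w assume w: "w \<in> A"
  have "w - c \<notin> period A"
  proof
    assume "w - c \<in> period A"
    then have "c - w \<in> period A"
      using add_subgroup_uminus[OF add_subgroup_period] by fastforce
    then have "w + (c - w) \<in> A"
      using w unfolding period_def by blast
    with \<open>c \<notin> A\<close> show False
      by simp
  qed
  then show "w \<in> {w. w - c \<notin> period A}"
    by simp
next
  fix w assume "w \<in> {w. w - c \<notin> period A}"
  then show "w \<in> A"
    using compl add_subgroup_uminus_iff[OF add_subgroup_period, of "c - w" A] by fastforce
qed

lemma exists_coset_rep:
  assumes H: "add_subgroup H" and gen: "range (\<lambda>m. nat_mult m g) = UNIV"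
    and n: "0 < n" "nat_mult n g \<in> H"
  obtains j where "j < n" "w - nat_mult j g \<in> H"
proof -
  obtain m where m: "w = nat_mult m g"
    using gen by (metis UNIV_I imageE)
  have "nat_mult m g = nat_mult (m div n) (nat_mult n g) + nat_mult (m mod n) g"
    by (metis div_mult_mod_eq nat_mult_add nat_mult_mult)
  then have "w - nat_mult (m mod n) g = nat_mult (m div n) (nat_mult n g)"
    unfolding m by (simp add: algebra_simps)
  then have "w - nat_mult (m mod n) g \<in> H"
    using add_subgroup_nat_mult[OF H n(2)] by simp
  with n(1) show thesis
    by (intro that[of "m mod n"]) simp_all
qed

lemma setplus_multiples_upto_eq_coset_compl:
  assumes H: "add_subgroup H" and gen: "range (\<lambda>m. nat_mult m g) = UNIV"
    and n: "2 \<le> n" "\<And>r. nat_mult r g \<in> H \<longleftrightarrow> n dvd r"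
  shows "setplus H (multiples_upto (n - 2) g) = {w. w + g \<notin> H}"
proof (rule set_eqI)
  fix w
  have shift: "w + g \<in> H \<longleftrightarrow> nat_mult (Suc j) g \<in> H" if "w - nat_mult j g \<in> H" for j
  proof -
    have "(w + g) - nat_mult (Suc j) g = w - nat_mult j g"
      by (simp add: algebra_simps)
    then show ?thesis
      using add_subgroup_mem_iff_diff_mem[OF H] that by metis
  qed
  have "0 < n" "nat_mult n g \<in> H"
    using n by simp_all
  then obtain j where j: "j < n" "w - nat_mult j g \<in> H"
    using exists_coset_rep[OF H gen] by metis
  show "w \<in> setplus H (multiples_upto (n - 2) g) \<longleftrightarrow> w \<in> {w. w + g \<notin> H}"
  proof
    assume "w \<in> setplus H (multiples_upto (n - 2) g)"
    then obtain i where "i \<le> n - 2" "w - nat_mult i g \<in> H"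
      by (auto simp: mem_setplus_multiples_upto)
    moreover from \<open>i \<le> n - 2\<close> have "\<not> n dvd Suc i"
      using n(1) by (auto dest: dvd_imp_le)
    ultimately show "w \<in> {w. w + g \<notin> H}"
      using shift n(2) by blast
  next
    assume "w \<in> {w. w + g \<notin> H}"
    then have "\<not> n dvd Suc j"
      using shift[OF j(2)] n(2) by blast
    moreover have "j = n - 1 \<Longrightarrow> Suc j = n"
      using n(1) by simp
    ultimately have "j \<noteq> n - 1"
      by auto
    with j(1) have "j \<le> n - 2"
      by linarith
    with j(2) show "w \<in> setplus H (multiples_upto (n - 2) g)"
      by (auto simp: mem_setplus_multiples_upto)
  qed
qed

locale P0_automorphism_trivial_pullback =
  fixes f :: "'a::{finite,ab_group_add} set \<Rightarrow> 'a set"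
  assumes automorphism: "P0_automorphism f" and pullback: "trivial_pullback f"
begin

lemma f_setplus: "A \<in> P0 \<Longrightarrow> B \<in> P0 \<Longrightarrow> f (setplus A B) = setplus (f A) (f B)"
  using automorphism unfolding P0_automorphism_def by blast

lemma f_in_P0: "A \<in> P0 \<Longrightarrow> f A \<in> P0"
  using automorphism unfolding P0_automorphism_def bij_betw_def by blast

lemma inj_on_f: "inj_on f P0"
  using automorphism unfolding P0_automorphism_def bij_betw_def by blast

lemma f_zero: "f {0} = {0}"
  using automorphism unfolding P0_automorphism_def by blast

lemma f_setplus_pair: "A \<in> P0 \<Longrightarrow> f (setplus A {0, x}) = setplus (f A) {0, x}"
  using f_setplus[of A "{0, x}"] pullback unfolding trivial_pullback_def by simp

lemma period_f:
  assumes A: "A \<in> P0"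
  shows "period (f A) = period A"
proof (rule set_eqI)
  fix x
  have "x \<in> period (f A) \<longleftrightarrow> setplus (f A) {0, x} = f A"
    by (simp add: setplus_pair_eq_iff_period)
  also have "\<dots> \<longleftrightarrow> f (setplus A {0, x}) = f A"
    by (simp add: f_setplus_pair A)
  also have "\<dots> \<longleftrightarrow> setplus A {0, x} = A"
    using inj_on_eq_iff[OF inj_on_f setplus_in_P0[OF A pair_in_P0] A] .
  also have "\<dots> \<longleftrightarrow> x \<in> period A"
    by (rule setplus_pair_eq_iff_period)
  finally show "x \<in> period (f A) \<longleftrightarrow> x \<in> period A" .
qed

lemma f_add_subgroup:
  assumes H: "add_subgroup H"
  shows "f H = H"
proof -
  have HP0: "H \<in> P0"
    using add_subgroup_zero[OF H] by (simp add: P0_def)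
  have "setplus H H = H"
  proof
    show "setplus H H \<subseteq> H"
      using add_subgroup_add[OF H] unfolding setplus_def by blast
    show "H \<subseteq> setplus H H"
      using add_subgroup_zero[OF H] unfolding setplus_def by force
  qed
  then have "period H = H" "setplus (f H) (f H) = f H"
    using period_eq_self add_subgroup_zero[OF H] f_setplus[OF HP0 HP0] by auto
  moreover have "0 \<in> f H"
    using f_in_P0[OF HP0] by (simp add: P0_def)
  ultimately have "period (f H) = f H"
    using period_eq_self by blast
  with HP0 \<open>period H = H\<close> show ?thesis
    using period_f by metis
qed

lemma f_multiples_upto: "f (multiples_upto k x) = multiples_upto k x"
  by (induction k)
    (simp_all add: multiples_upto_0 f_zero multiples_upto_Suc f_setplus_pair multiples_upto_in_P0)

lemma not_mem_f_coset_compl: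
  assumes H: "add_subgroup H" and "b \<notin> H" "c \<notin> H" and cb: "(c - b) + (c - b) \<notin> H"
    and fixed: "f {w. w - b \<notin> H} = {w. w - b \<notin> H}"
  shows "c \<notin> f {w. w - c \<notin> H}"
proof
  assume c: "c \<in> f {w. w - c \<notin> H}"
  define D where "D = {w. w - c \<notin> H \<and> w - b \<notin> H}"
  \<comment> \<open>adding \<open>{0, c - b}\<close> to \<open>D\<close> refills the coset \<open>b + H\<close>, adding \<open>{0, b - c}\<close> refills \<open>c + H\<close>\<close>
  have "D \<in> P0"
    using \<open>b \<notin> H\<close> \<open>c \<notin> H\<close> add_subgroup_uminus_iff[OF H] by (simp add: D_def P0_def)
  have "(b - c) + (b - c) = - ((c - b) + (c - b))"
    by (simp add: algebra_simps)
  then have bc: "(b - c) + (b - c) \<notin> H"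
    using cb add_subgroup_uminus_iff[OF H] by metis
  have "f {w. w - c \<notin> H} = f (setplus D {0, c - b})"
    using setplus_two_coset_compl[OF H cb] by (simp add: D_def)
  with c have "c \<in> f D \<or> b \<in> f D"
    by (simp add: f_setplus_pair[OF \<open>D \<in> P0\<close>] mem_setplus_pair)
  then have "b \<in> setplus (f D) {0, b - c}"
    by (auto simp: mem_setplus_pair)
  also have "\<dots> = f (setplus D {0, b - c})"
    by (simp add: f_setplus_pair[OF \<open>D \<in> P0\<close>])
  also have "\<dots> = {w. w - b \<notin> H}"
    using setplus_two_coset_compl[OF H bc] fixed by (simp add: D_def conj_commute)
  finally show False
    using add_subgroup_zero[OF H] by simp
qed

lemma f_coset_compl_uminus_generator:
  assumes H: "add_subgroup H" and gen: "range (\<lambda>m. nat_mult m g) = UNIV"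
    and n: "2 \<le> n" "\<And>r. nat_mult r g \<in> H \<longleftrightarrow> n dvd r"
  shows "f {w. w + g \<notin> H} = {w. w + g \<notin> H}"
proof -
  have "H \<in> P0"
    using add_subgroup_zero[OF H] by (simp add: P0_def)
  have "f (setplus H (multiples_upto (n - 2) g)) = setplus H (multiples_upto (n - 2) g)"
    using f_setplus[OF \<open>H \<in> P0\<close> multiples_upto_in_P0]
    by (simp add: f_add_subgroup[OF H] f_multiples_upto)
  then show ?thesis
    by (simp add: setplus_multiples_upto_eq_coset_compl[OF H gen n])
qed

lemma not_mem_f_coset_compl_cyclic:
  fixes g :: 'a
  assumes gen: "range (\<lambda>m. nat_mult m g) = UNIV" and H: "add_subgroup H" and c: "c \<notin> H"
  shows "c \<notin> f {w. w - c \<notin> H}"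
proof -
  obtain n where n: "0 < n" "\<And>r. nat_mult r g \<in> H \<longleftrightarrow> n dvd r"
    using nat_mult_mem_subgroup_iff_dvd[OF H] by metis
  then have "nat_mult n g \<in> H"
    by simp
  then obtain t where t: "t < n" "c - nat_mult t g \<in> H"
    using exists_coset_rep[OF H gen n(1)] by metis
  have "t \<noteq> 0"
    using t(2) c by (metis diff_zero nat_mult_0)
  with t(1) have "2 \<le> n"
    by linarith
  have gen_minus: "range (\<lambda>m. nat_mult m (- g)) = UNIV"
  proof -
    have "x \<in> range (\<lambda>m. nat_mult m (- g))" for x
    proof -
      obtain m where "- x = nat_mult m g"
        using gen by (metis UNIV_I imageE)
      then have "x = nat_mult m (- g)"
        by (metis nat_mult_minus minus_minus)
      then show ?thesis
        by blast
    qed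
    then show ?thesis
      by blast
  qed
  have n_minus: "nat_mult r (- g) \<in> H \<longleftrightarrow> n dvd r" for r
    by (simp add: nat_mult_minus add_subgroup_uminus_iff[OF H] n(2))
  have fixed_plus: "f {w. w - (- g) \<notin> H} = {w. w - (- g) \<notin> H}"
    using f_coset_compl_uminus_generator[OF H gen \<open>2 \<le> n\<close> n(2)] by simp
  have fixed_minus: "f {w. w - g \<notin> H} = {w. w - g \<notin> H}"
    using f_coset_compl_uminus_generator[OF H gen_minus \<open>2 \<le> n\<close> n_minus] by simp
  have c_not_mem: "c \<notin> {w. w - c \<notin> H}"
    using add_subgroup_zero[OF H] by simp
  have g: "g \<notin> H" "- g \<notin> H"
    using n(2)[of 1] \<open>2 \<le> n\<close> add_subgroup_uminus_iff[OF H] by auto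
  obtain s where s: "t = Suc s"
    using \<open>t \<noteq> 0\<close> not0_implies_Suc by blast
  consider "t = 1" | "t = n - 1" | "2 \<le> t" "t + 2 \<le> n"
    using \<open>t \<noteq> 0\<close> t(1) by linarith
  then show ?thesis
  proof cases
    case 1
    then have "{w. w - c \<notin> H} = {w. w - g \<notin> H}"
      using coset_compl_eq[OF H] t(2) by simp
    then show ?thesis
      using fixed_minus c_not_mem by simp
  next
    case 2
    have "c - (- g) - (c - nat_mult t g) = nat_mult n g"
      using 2 n(1) by (simp add: algebra_simps flip: nat_mult_Suc)
    then have "c - (- g) \<in> H"
      using add_subgroup_mem_iff_diff_mem[OF H] t(2) \<open>nat_mult n g \<in> H\<close> by metis
    then have "{w. w - c \<notin> H} = {w. w - (- g) \<notin> H}"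
      by (rule coset_compl_eq[OF H])
    then show ?thesis
      using fixed_plus c_not_mem by simp
  next
    case 3
    have double: "(c - b) + (c - b) \<in> H \<longleftrightarrow> n dvd (j + j)"
      if "c - b - nat_mult j g = c - nat_mult t g" for b j
    proof -
      have "(c - b) + (c - b) - nat_mult (j + j) g = (c - nat_mult t g) + (c - nat_mult t g)"
        using that by (simp add: nat_mult_add algebra_simps)
      then show ?thesis
        using add_subgroup_mem_iff_diff_mem[OF H] add_subgroup_add[OF H t(2) t(2)] n(2) by metis
    qed
    have "(c - (- g)) + (c - (- g)) \<in> H \<longleftrightarrow> n dvd (Suc t + Suc t)"
      by (rule double) (simp add: algebra_simps)
    moreover have "(c - g) + (c - g) \<in> H \<longleftrightarrow> n dvd (s + s)"
      by (rule double) (simp add: s algebra_simps)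
    moreover have "\<not> (n dvd (Suc t + Suc t) \<and> n dvd (s + s))"
    proof
      assume "n dvd (Suc t + Suc t) \<and> n dvd (s + s)"
      then have "n dvd 4"
        using dvd_diff_nat[of n "Suc t + Suc t" "s + s"] s by simp
      then have "n = 4" "t = 2"
        using dvd_imp_le[of n 4] 3 by auto
      with \<open>n dvd (Suc t + Suc t) \<and> n dvd (s + s)\<close> show False
        by simp
    qed
    ultimately consider "(c - (- g)) + (c - (- g)) \<notin> H" | "(c - g) + (c - g) \<notin> H"
      by blast
    then show ?thesis
    proof cases
      case 1
      from not_mem_f_coset_compl[OF H g(2) c this fixed_plus] show ?thesis .
    next
      case 2
      from not_mem_f_coset_compl[OF H g(1) c this fixed_minus] show ?thesis .
    qed
  qed
qed

lemma f_setplus_pair_if_supersets_fixed: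
  assumes A: "A \<in> P0" and x: "x \<notin> period A"
    and supersets: "\<And>B. B \<in> P0 \<Longrightarrow> A \<subset> B \<Longrightarrow> f B = B"
  shows "setplus (f A) {0, x} = setplus A {0, x}"
proof -
  have "A \<subset> setplus A {0, x}"
    using subset_setplus_pair x setplus_pair_eq_iff_period by blast
  then have "f (setplus A {0, x}) = setplus A {0, x}"
    using supersets setplus_in_P0[OF A pair_in_P0] by blast
  then show ?thesis
    using f_setplus_pair[OF A] by simp
qed

lemma f_subset_if_supersets_fixed:
  fixes g :: 'a
  assumes gen: "range (\<lambda>m. nat_mult m g) = UNIV" and A: "A \<in> P0"
    and supersets: "\<And>B. B \<in> P0 \<Longrightarrow> A \<subset> B \<Longrightarrow> f B = B"
  shows "f A \<subseteq> A"
proof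
  fix c assume c: "c \<in> f A"
  show "c \<in> A"
  proof (rule ccontr)
    assume "c \<notin> A"
    show False
    proof (cases "\<exists>c'. c' \<notin> A \<and> c - c' \<notin> period A")
      case True
      then obtain c' where c': "c' \<notin> A" "c - c' \<notin> period A"
        by blast
      have "c \<in> setplus (f A) {0, c - c'}"
        using c subset_setplus_pair by blast
      then have "c \<in> setplus A {0, c - c'}"
        using f_setplus_pair_if_supersets_fixed[OF A c'(2) supersets] by simp
      with \<open>c \<notin> A\<close> c'(1) show False
        by (simp add: mem_setplus_pair)
    next
      case False
      then have "A = {w. w - c \<notin> period A}"
        using coset_compl_of_period[OF \<open>c \<notin> A\<close>] by blast
      moreover have "c \<notin> period A"
        using A \<open>c \<notin> A\<close> unfolding P0_def period_def by force
      ultimately have "c \<notin> f A"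
        using not_mem_f_coset_compl_cyclic[OF gen add_subgroup_period] by metis
      with c show False
        by simp
    qed
  qed
qed

lemma subset_f_if_supersets_fixed:
  assumes A: "A \<in> P0" and "c \<notin> A" and "f A \<subseteq> A"
    and supersets: "\<And>B. B \<in> P0 \<Longrightarrow> A \<subset> B \<Longrightarrow> f B = B"
  shows "A \<subseteq> f A"
proof
  fix a assume a: "a \<in> A"
  show "a \<in> f A"
  proof (cases "a - c \<in> period A")
    case True
    then have "a + - (a - c) \<in> A"
      using a add_subgroup_uminus[OF add_subgroup_period] unfolding period_def by blast
    with \<open>c \<notin> A\<close> show ?thesis
      by simp
  next
    case False
    have "a \<in> setplus A {0, a - c}"
      using a subset_setplus_pair by blast
    then have "a \<in> setplus (f A) {0, a - c}"
      using f_setplus_pair_if_supersets_fixed[OF A False supersets] by simp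
    with \<open>c \<notin> A\<close> \<open>f A \<subseteq> A\<close> show ?thesis
      by (auto simp: mem_setplus_pair)
  qed
qed

lemma f_eq_self:
  fixes g :: 'a
  assumes gen: "range (\<lambda>m. nat_mult m g) = UNIV"
  shows "A \<in> P0 \<Longrightarrow> f A = A"
proof (induction A rule: measure_induct_rule[of "\<lambda>A. card (- A)"])
  case (less A)
  have supersets: "f B = B" if "B \<in> P0" "A \<subset> B" for B
    using less.IH[OF _ that(1)] that(2) by (simp add: psubset_card_mono)
  show "f A = A"
  proof (cases "A = UNIV")
    case True
    then show ?thesis
      using f_add_subgroup by (simp add: add_subgroup_def)
  next
    case False
    then obtain c where "c \<notin> A"
      by blast
    have "f A \<subseteq> A"
      using f_subset_if_supersets_fixed[OF gen less.prems supersets] .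
    moreover have "A \<subseteq> f A"
      using subset_f_if_supersets_fixed[OF less.prems \<open>c \<notin> A\<close> \<open>f A \<subseteq> A\<close> supersets] .
    ultimately show ?thesis
      by blast
  qed
qed

end

theorem corollary3p4:
  fixes f :: "('a::{finite, ab_group_add}) set \<Rightarrow> 'a set"
  assumes "cyclic_add_group TYPE('a)"
    and "P0_automorphism f"
    and "trivial_pullback f"
  shows "\<forall>A\<in>P0. f A = A"
proof -
  obtain g :: 'a where "range (\<lambda>m. nat_mult m g) = UNIV"
    using cyclic_add_group_nat_mult_generator[OF assms(1)] by blast
  interpret P0_automorphism_trivial_pullback f
    using assms(2,3) by unfold_locales
  show ?thesis
    using f_eq_self[OF \<open>range (\<lambda>m. nat_mult m g) = UNIV\<close>] by blast
qed

end
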